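(* Let $X$ be an infinite compact metrizable space and $h\colon X\to X$ a minimal homeomorphism. If $F\subset X$ is a thin closed set, then $F$ is universally null.
   Context: $M_h(X)$ denotes the set of $h$-invariant Borel probability measures on $X$; a Borel set is universally null if it has measure $0$ for all $\mu\in M_h(X)$. For $F\subset X$ closed and $U\subset X$ open, write $F\prec U$ if there exist $M\in\mathbb{N}$, open sets $U_0,\dots,U_M\subset X$ and integers $d(0),\dots,d(M)$ such that $F\subset\bigcup_{j=0}^M U_j$, $h^{d(j)}(U_j)\subset U$ for all $j$, and the sets $h^{d(j)}(U_j)$ are pairwise disjoint. A closed set $F$ is thin if $F\prec U$ for every non-empty open $U\subset X$. *)

theory Defs
  imports "HOL-Probability.Probability"
begin

text \<open>The space X is the whole (compact, metrizable) type 'a. Integer powers of a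
bijection h: h^n for n >= 0, (h^-1)^(-n) for n < 0.\<close>

definition hpow :: "('a \<Rightarrow> 'a) \<Rightarrow> int \<Rightarrow> 'a \<Rightarrow> 'a" where
  "hpow h n = (if 0 \<le> n then h ^^ nat n else inv h ^^ nat (- n))"

definition minimal_homeo :: "('a::topological_space \<Rightarrow> 'a) \<Rightarrow> bool" where
  "minimal_homeo h \<longleftrightarrow> (\<exists>g. homeomorphism UNIV UNIV h g) \<and>
     (\<forall>F. closed F \<and> h ` F = F \<longrightarrow> F = {} \<or> F = UNIV)"

definition inv_measures :: "('a::topological_space \<Rightarrow> 'a) \<Rightarrow> 'a measure set" where
  "inv_measures h = {\<mu>. prob_space \<mu> \<and> sets \<mu> = sets borel \<and>
       (\<forall>A \<in> sets borel. emeasure \<mu> (h -` A) = emeasure \<mu> A)}"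

definition universally_null :: "('a::topological_space \<Rightarrow> 'a) \<Rightarrow> 'a set \<Rightarrow> bool" where
  "universally_null h A \<longleftrightarrow> A \<in> sets borel \<and> (\<forall>\<mu> \<in> inv_measures h. emeasure \<mu> A = 0)"

definition precedes :: "('a::topological_space \<Rightarrow> 'a) \<Rightarrow> 'a set \<Rightarrow> 'a set \<Rightarrow> bool" where
  "precedes h F U \<longleftrightarrow> (\<exists>(M::nat) (V::nat \<Rightarrow> 'a set) (d::nat \<Rightarrow> int).
      (\<forall>j\<le>M. open (V j)) \<and> F \<subseteq> (\<Union>j\<le>M. V j) \<and>
      (\<forall>j\<le>M. hpow h (d j) ` V j \<subseteq> U) \<and>
      (\<forall>i\<le>M. \<forall>j\<le>M. i \<noteq> j \<longrightarrow> hpow h (d i) ` V i \<inter> hpow h (d j) ` V j = {}))"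

definition thin :: "('a::topological_space \<Rightarrow> 'a) \<Rightarrow> 'a set \<Rightarrow> bool" where
  "thin h F \<longleftrightarrow> closed F \<and> (\<forall>U. open U \<and> U \<noteq> {} \<longrightarrow> precedes h F U)"

end

theory Submission
  imports Defs
begin

text \<open>Fix an invariant probability measure \<open>\<mu>\<close>. If \<open>F \<prec> U\<close>, then \<open>F\<close> is covered by finitely
  many open sets which some powers of \<open>h\<close> move to pairwise disjoint subsets of \<open>U\<close>; since these
  powers preserve \<open>\<mu>\<close>, this gives \<open>\<mu> F \<le> \<mu> U\<close>. On an infinite metric space every probability
  measure has a point of arbitrarily small mass, hence nonempty open balls of arbitrarily small
  measure. As \<open>F\<close> is thin, \<open>\<mu> F\<close> is below all of them, so \<open>\<mu> F = 0\<close>.\<close>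

lemma homeomorphism_funpow:
  fixes h g :: "'a::topological_space \<Rightarrow> 'a"
  assumes "homeomorphism UNIV UNIV h g"
  shows "homeomorphism UNIV UNIV (h ^^ n) (g ^^ n)"
proof (induction n)
  case 0
  show ?case by (simp add: homeomorphism_def)
next
  case (Suc n)
  have "homeomorphism UNIV UNIV (h \<circ> h ^^ n) (g ^^ n \<circ> g)"
    by (rule homeomorphism_compose[OF Suc assms])
  then show ?case
    by (metis funpow.simps(2) funpow_Suc_right)
qed

lemma homeomorphism_hpow:
  fixes h g :: "'a::topological_space \<Rightarrow> 'a"
  assumes "homeomorphism UNIV UNIV h g"
  shows "homeomorphism UNIV UNIV (hpow h n) (hpow h (- n))"
proof -
  have inv_h: "inv h = g"
    using assms by (intro inv_equality) (auto simp: homeomorphism_def)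
  show ?thesis
  proof (cases "0 \<le> n")
    case True
    then have "hpow h (- n) = g ^^ nat n"
      by (cases "n = 0") (auto simp: hpow_def inv_h)
    then show ?thesis
      using True homeomorphism_funpow[OF assms] by (simp add: hpow_def)
  next
    case False
    then show ?thesis
      using homeomorphism_funpow[OF homeomorphism_symD[OF assms]] by (simp add: hpow_def inv_h)
  qed
qed

definition borel_invariant :: "'a measure \<Rightarrow> ('a::topological_space \<Rightarrow> 'a) \<Rightarrow> bool" where
  "borel_invariant \<mu> f \<longleftrightarrow> f \<in> borel_measurable borel \<and>
     (\<forall>A \<in> sets borel. emeasure \<mu> (f -` A) = emeasure \<mu> A)"

lemma borel_invariant_comp:
  assumes f: "borel_invariant \<mu> f" and g: "borel_invariant \<mu> g"
  shows "borel_invariant \<mu> (f \<circ> g)"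
  unfolding borel_invariant_def
proof safe
  show "f \<circ> g \<in> borel_measurable borel"
    using f g by (auto simp: borel_invariant_def)
  fix A :: "'a set" assume A: "A \<in> sets borel"
  then have "f -` A \<in> sets borel"
    using f measurable_sets[of f borel borel A] by (auto simp: borel_invariant_def)
  then have "emeasure \<mu> (g -` (f -` A)) = emeasure \<mu> (f -` A)"
    using g by (simp add: borel_invariant_def)
  also have "\<dots> = emeasure \<mu> A"
    using f A by (simp add: borel_invariant_def)
  finally show "emeasure \<mu> ((f \<circ> g) -` A) = emeasure \<mu> A"
    by (simp only: vimage_comp)
qed

lemma borel_invariant_funpow:
  assumes "borel_invariant \<mu> f"
  shows "borel_invariant \<mu> (f ^^ n)"
proof (induction n)
  case 0
  show ?case by (simp add: borel_invariant_def)
next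
  case (Suc n)
  show ?case using borel_invariant_comp[OF assms Suc] by (simp only: funpow.simps(2))
qed

lemma borel_invariant_homeomorphism_inverse:
  assumes f: "borel_invariant \<mu> f" and fg: "homeomorphism UNIV UNIV f g"
  shows "borel_invariant \<mu> g"
  unfolding borel_invariant_def
proof safe
  show g_meas: "g \<in> borel_measurable borel"
    using fg by (intro borel_measurable_continuous_onI) (auto simp: homeomorphism_def)
  fix A :: "'a set" assume A: "A \<in> sets borel"
  have "f -` (g -` A) = A"
    using fg by (auto simp: homeomorphism_def)
  moreover have "g -` A \<in> sets borel"
    using g_meas A measurable_sets[of g borel borel A] by simp
  ultimately show "emeasure \<mu> (g -` A) = emeasure \<mu> A"
    using f by (metis borel_invariant_def)
qed

lemma borel_invariant_hpow:
  assumes hg: "homeomorphism UNIV UNIV h g" and h: "borel_invariant \<mu> h"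
  shows "borel_invariant \<mu> (hpow h n)"
proof -
  have nonneg: "borel_invariant \<mu> (hpow h k)" if "0 \<le> k" for k
    using that borel_invariant_funpow[OF h] by (simp add: hpow_def)
  show ?thesis
  proof (cases "0 \<le> n")
    case True
    then show ?thesis by (rule nonneg)
  next
    case False
    then show ?thesis
      using borel_invariant_homeomorphism_inverse[OF nonneg homeomorphism_hpow[OF hg, of "- n"]]
      by simp
  qed
qed

lemma homeomorphism_image_eq_vimage:
  assumes "homeomorphism UNIV UNIV f g"
  shows "f ` A = g -` A"
  using assms unfolding homeomorphism_def by (auto intro: rev_image_eqI)

lemma emeasure_homeomorphism_image:
  assumes "homeomorphism UNIV UNIV f g" "borel_invariant \<mu> g" "A \<in> sets borel"
  shows "emeasure \<mu> (f ` A) = emeasure \<mu> A"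
proof -
  have "f ` A = g -` A"
    by (rule homeomorphism_image_eq_vimage[OF assms(1)])
  then show ?thesis
    using assms(2,3) by (simp add: borel_invariant_def)
qed

lemma measure_le_if_precedes:
  fixes \<mu> :: "'a::topological_space measure"
  assumes "finite_measure \<mu>" and sets_\<mu>: "sets \<mu> = sets borel"
    and hg: "homeomorphism UNIV UNIV h g" and h: "borel_invariant \<mu> h"
    and "precedes h F U" and "open U"
  shows "measure \<mu> F \<le> measure \<mu> U"
proof -
  interpret finite_measure \<mu> by fact
  obtain M :: nat and V :: "nat \<Rightarrow> 'a set" and d :: "nat \<Rightarrow> int" where
    V_open: "\<forall>j\<le>M. open (V j)" and cover: "F \<subseteq> (\<Union>j\<le>M. V j)" and
    into_U: "\<forall>j\<le>M. hpow h (d j) ` V j \<subseteq> U" and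
    disj: "\<forall>i\<le>M. \<forall>j\<le>M. i \<noteq> j \<longrightarrow> hpow h (d i) ` V i \<inter> hpow h (d j) ` V j = {}"
    using \<open>precedes h F U\<close> unfolding precedes_def by (elim exE conjE) (rule that)
  define W where "W j = hpow h (d j) ` V j" for j
  have W_open: "open (W j)" and measure_W: "measure \<mu> (W j) = measure \<mu> (V j)"
    if "j \<le> M" for j
  proof -
    have hom: "homeomorphism UNIV UNIV (hpow h (d j)) (hpow h (- d j))"
      by (rule homeomorphism_hpow[OF hg])
    have "continuous_on UNIV (hpow h (- d j))"
      using hom by (simp add: homeomorphism_def)
    then show "open (W j)"
      using V_open that by (simp add: W_def homeomorphism_image_eq_vimage[OF hom] open_vimage)
    show "measure \<mu> (W j) = measure \<mu> (V j)"
      using emeasure_homeomorphism_image[OF hom borel_invariant_hpow[OF hg h]] V_open that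
      by (simp add: W_def measure_def)
  qed
  have "measure \<mu> F \<le> measure \<mu> (\<Union>j\<le>M. V j)"
    using cover V_open by (intro finite_measure_mono) (auto simp: sets_\<mu>)
  also have "\<dots> \<le> (\<Sum>j\<le>M. measure \<mu> (V j))"
    using V_open by (intro measure_subadditive_finite) (auto simp: sets_\<mu>)
  also have "\<dots> = (\<Sum>j\<le>M. measure \<mu> (W j))"
    by (simp add: measure_W)
  also have "\<dots> = measure \<mu> (\<Union>j\<le>M. W j)"
    using W_open disj
    by (intro measure_UNION'[symmetric]) (auto simp: fmeasurable_eq_sets sets_\<mu> pairwise_def disjnt_def W_def)
  also have "\<dots> \<le> measure \<mu> U"
    using into_U \<open>open U\<close> by (intro finite_measure_mono) (auto simp: W_def sets_\<mu>)
  finally show ?thesis .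
qed

lemma prob_space_small_singleton:
  assumes "prob_space \<mu>" "sets \<mu> = sets borel" "infinite (UNIV :: 'a::t1_space set)" "0 < e"
  shows "\<exists>x::'a. measure \<mu> {x} < e"
proof (rule ccontr)
  interpret prob_space \<mu> by fact
  assume "\<not> ?thesis"
  then have large: "e \<le> measure \<mu> {x}" for x by (simp add: not_less)
  obtain N :: nat where N: "1 / e < real N"
    using reals_Archimedean2 by blast
  obtain S :: "'a set" where S: "finite S" "card S = N"
    using infinite_arbitrarily_large[OF \<open>infinite UNIV\<close>] by blast
  have "real N * e = (\<Sum>x\<in>S. e)"
    using S by simp
  also have "\<dots> \<le> (\<Sum>x\<in>S. measure \<mu> {x})"
    using large by (intro sum_mono) auto
  also have "\<dots> = measure \<mu> S"
    using S(1) \<open>sets \<mu> = sets borel\<close> by (intro measure_eq_sum_singleton[symmetric]) auto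
  also have "\<dots> \<le> 1"
    by (rule prob_le_1)
  finally show False
    using N \<open>0 < e\<close> by (simp add: field_simps)
qed

lemma Inter_ball_inverse_Suc:
  fixes x :: "'a::metric_space"
  shows "(\<Inter>n. ball x (1 / real (Suc n))) = {x}"
proof (intro equalityI subsetI)
  fix y assume y: "y \<in> (\<Inter>n. ball x (1 / real (Suc n)))"
  show "y \<in> {x}"
  proof (rule ccontr)
    assume "y \<notin> {x}"
    then have "0 < dist x y" by simp
    then obtain n where n: "1 / real (Suc n) < dist x y"
      by (rule nat_approx_posE)
    from y have "y \<in> ball x (1 / real (Suc n))" by blast
    with n show False
      unfolding mem_ball by linarith
  qed
qed simp

lemma measure_ball_tendsto_singleton:
  fixes x :: "'a::metric_space"
  assumes "finite_measure \<mu>" "sets \<mu> = sets borel"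
  shows "(\<lambda>n. measure \<mu> (ball x (1 / real (Suc n)))) \<longlonglongrightarrow> measure \<mu> {x}"
proof -
  interpret finite_measure \<mu> by fact
  define B where "B n = ball x (1 / real (Suc n))" for n
  have "range B \<subseteq> sets \<mu>"
    using \<open>sets \<mu> = sets borel\<close> by (simp add: B_def image_subset_iff)
  moreover have "decseq B"
    unfolding B_def by (intro decseq_SucI subset_ball) (simp add: divide_simps)
  ultimately have "(\<lambda>n. measure \<mu> (B n)) \<longlonglongrightarrow> measure \<mu> (\<Inter>n. B n)"
    by (rule finite_Lim_measure_decseq)
  then show ?thesis
    by (simp only: B_def Inter_ball_inverse_Suc)
qed

lemma prob_space_small_open:
  fixes \<mu> :: "'a::metric_space measure"
  assumes "prob_space \<mu>" "sets \<mu> = sets borel" "infinite (UNIV :: 'a set)" "0 < e"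
  obtains U where "open U" "U \<noteq> {}" "measure \<mu> U < e"
proof -
  interpret prob_space \<mu> by fact
  obtain x where "measure \<mu> {x} < e"
    using prob_space_small_singleton[OF assms] by blast
  then have "\<forall>\<^sub>F n in sequentially. measure \<mu> (ball x (1 / real (Suc n))) < e"
    using order_tendstoD(2)[OF measure_ball_tendsto_singleton[OF finite_measure_axioms]]
      \<open>sets \<mu> = sets borel\<close> by blast
  then obtain n where "measure \<mu> (ball x (1 / real (Suc n))) < e"
    unfolding eventually_sequentially by blast
  then show ?thesis
    by (intro that[of "ball x (1 / real (Suc n))"]) auto
qed

lemma borel_invariant_if_inv_measures:
  assumes "\<mu> \<in> inv_measures h" "continuous_on UNIV h"
  shows "borel_invariant \<mu> h"
  using assms by (auto simp: inv_measures_def borel_invariant_def intro: borel_measurable_continuous_onI)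

lemma measure_thin_eq_0:
  fixes \<mu> :: "'a::metric_space measure"
  assumes prob: "prob_space \<mu>" and sets_\<mu>: "sets \<mu> = sets borel" and "infinite (UNIV :: 'a set)"
    and hg: "homeomorphism UNIV UNIV h g" and h: "borel_invariant \<mu> h" and "thin h F"
  shows "measure \<mu> F = 0"
proof -
  interpret prob_space \<mu> by (rule prob)
  have "measure \<mu> F < e" if "0 < e" for e
  proof -
    obtain U where U: "open U" "U \<noteq> {}" "measure \<mu> U < e"
      using prob_space_small_open[OF prob sets_\<mu> \<open>infinite UNIV\<close> \<open>0 < e\<close>] .
    have "measure \<mu> F \<le> measure \<mu> U"
      using \<open>thin h F\<close> U(1,2) unfolding thin_def
      by (intro measure_le_if_precedes[OF finite_measure_axioms sets_\<mu> hg h]) auto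
    with U(3) show ?thesis by linarith
  qed
  then show ?thesis
    by (metis measure_nonneg order.irrefl order_le_less)
qed

theorem lemma3p6:
  fixes h :: "'a::metric_space \<Rightarrow> 'a" and F :: "'a set"
  assumes "compact (UNIV :: 'a set)"
    and "infinite (UNIV :: 'a set)"
    and "minimal_homeo h"
    and "closed F"
    and "thin h F"
  shows "universally_null h F"
proof -
  obtain g where hg: "homeomorphism UNIV UNIV h g"
    using \<open>minimal_homeo h\<close> unfolding minimal_homeo_def by blast
  have "emeasure \<mu> F = 0" if \<mu>: "\<mu> \<in> inv_measures h" for \<mu>
  proof -
    have prob: "prob_space \<mu>" and sets_\<mu>: "sets \<mu> = sets borel"
      using \<mu> unfolding inv_measures_def by auto
    have "borel_invariant \<mu> h"
      using \<mu> hg by (intro borel_invariant_if_inv_measures) (auto simp: homeomorphism_def)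
    then have "measure \<mu> F = 0"
      using measure_thin_eq_0[OF prob sets_\<mu> \<open>infinite UNIV\<close> hg] \<open>thin h F\<close> by blast
    interpret prob_space \<mu> by (rule prob)
    show ?thesis
      using \<open>measure \<mu> F = 0\<close> by (simp add: emeasure_eq_measure)
  qed
  then show ?thesis
    using \<open>closed F\<close> unfolding universally_null_def by simp
qed

end
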